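(* Let $n\geq 0$, let $\{b^n_j\}_{j=0}^n$ be a basis of the space of real univariate polynomials of degree at most $n$, and let $\mathbf{x}\in\mathbb{R}^{n+1}$ with $\mathbf{x}_0<\dots<\mathbf{x}_n$. Let $v$ and $w$ be polynomials of degree $n+1$ such that $v(\mathbf{x}_i)=0$, $v'(\mathbf{x}_i)\neq 0$ and $w(\mathbf{x}_i)\neq 0$ for each $0\le i\le n$. Then $V^n(\mathbf{x})$ is invertible and $$(V^n(\mathbf{x}))^{-1}=\mathrm{Bez}(v,w)\,(V^n(\mathbf{x}))^T\,\mathrm{diag}\!\left(\frac{1}{v'(\mathbf{x}_j)w(\mathbf{x}_j)}\right)_{j=0}^n.$$
   Context: The Vandermonde matrix $V^n(\mathbf{x})$ is the $(n+1)\times(n+1)$ matrix with entries $V^n_{ij}(\mathbf{x})=b^n_j(\mathbf{x}_i)$. For polynomials $v,w$ of degree at most $n+1$, the Bézout matrix $\mathrm{Bez}(v,w)$ is the unique $(n+1)\times(n+1)$ matrix satisfying $$\frac{v(s)w(t)-v(t)w(s)}{s-t}=\sum_{i,j=0}^n \mathrm{Bez}_{ij}(v,w)\,b^n_i(s)\,b^n_j(t).$$ *)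

theory Defs
  imports "HOL-Computational_Algebra.Polynomial" "Jordan_Normal_Form.Matrix"
begin

definition is_poly_basis :: "nat \<Rightarrow> (nat \<Rightarrow> real poly) \<Rightarrow> bool" where
  "is_poly_basis n b \<longleftrightarrow>
     (\<forall>j\<le>n. degree (b j) \<le> n) \<and>
     (\<forall>p. degree p \<le> n \<longrightarrow> (\<exists>c. p = (\<Sum>j\<le>n. Polynomial.smult (c j) (b j)))) \<and>
     (\<forall>c. (\<Sum>j\<le>n. Polynomial.smult (c j) (b j)) = 0 \<longrightarrow> (\<forall>j\<le>n. c j = 0))"

definition vandermonde :: "nat \<Rightarrow> (nat \<Rightarrow> real poly) \<Rightarrow> (nat \<Rightarrow> real) \<Rightarrow> real mat" where
  "vandermonde n b x = mat (n+1) (n+1) (\<lambda>(i,j). poly (b j) (x i))"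

definition bezout :: "nat \<Rightarrow> (nat \<Rightarrow> real poly) \<Rightarrow> real poly \<Rightarrow> real poly \<Rightarrow> real mat" where
  "bezout n b v w = (THE M. M \<in> carrier_mat (n+1) (n+1) \<and>
     (\<forall>s t. s \<noteq> t \<longrightarrow>
        (poly v s * poly w t - poly v t * poly w s) / (s - t) =
        (\<Sum>i\<le>n. \<Sum>j\<le>n. M $$ (i,j) * poly (b i) s * poly (b j) t)))"

end

theory Submission
  imports Defs "Jordan_Normal_Form.Determinant"
begin

(*
  Write c k = v'(x k) w(x k) and let L k be the Lagrange basis at the nodes x 0, ..., x n.
  Since v = lead_coeff v * prod (X - x m), one has v(t) = v'(x k) L k(t) (t - x k). Hence, for t
  not a node, v(s) w(t) - v(t) w(s) and (s - t) * sum c k L k(s) L k(t) are polynomials in s of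
  degree at most n + 1 that agree at t and at the n + 1 nodes, so they coincide; symmetry and
  the vanishing of v at the nodes extend this to all s \<noteq> t. Expanding each L k in the basis b
  identifies the Bezout matrix, and evaluating the kernel at pairs of nodes gives
  V * Bez(v,w) * V^T = diag(c k), from which the inverse formula is immediate.
*)

lemma inj_on_atMost_if_Suc_less:
  fixes x :: "nat \<Rightarrow> 'a::linorder"
  assumes "\<And>i. i < n \<Longrightarrow> x i < x (Suc i)"
  shows "inj_on x {..n}"
proof (rule strict_mono_on_imp_inj_on)
  show "strict_mono_on {..n} x"
    by (rule strict_mono_onI, rule lift_Suc_mono_less_ivl[where N = "{..<n}"]) (use assms in auto)
qed

definition lagrange_basis :: "nat \<Rightarrow> (nat \<Rightarrow> 'a::field) \<Rightarrow> nat \<Rightarrow> 'a poly" where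
  "lagrange_basis n x k =
     Polynomial.smult (inverse (\<Prod>m\<in>{..n}-{k}. x k - x m)) (\<Prod>m\<in>{..n}-{k}. [:- x m, 1:])"

lemma poly_lagrange_basis_node:
  assumes "inj_on x {..n}" "k \<le> n" "m \<le> n"
  shows "poly (lagrange_basis n x k) (x m) = (if m = k then 1 else 0)"
proof -
  have "(\<Prod>j\<in>{..n}-{k}. x k - x j) \<noteq> 0"
    using assms(1,2) by (auto simp: inj_on_def)
  then show ?thesis
    using assms by (auto simp: lagrange_basis_def poly_prod prod_zero_iff)
qed

lemma degree_lagrange_basis:
  assumes "k \<le> n"
  shows "degree (lagrange_basis n x k) \<le> n"
proof -
  have "degree (\<Prod>m\<in>{..n}-{k}. [:- x m, 1:]) \<le> sum (degree \<circ> (\<lambda>m. [:- x m, 1:])) ({..n}-{k})"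
    by (rule degree_prod_sum_le) simp
  also have "\<dots> = n" using assms by simp
  finally show ?thesis by (simp add: lagrange_basis_def)
qed

lemma eq_smult_lead_coeff_prod_roots:
  fixes v :: "'a::field poly"
  assumes "inj_on x {..n}" "degree v = n + 1" "\<And>i. i \<le> n \<Longrightarrow> poly v (x i) = 0"
  shows "v = Polynomial.smult (lead_coeff v) (\<Prod>m\<le>n. [:- x m, 1:])"
proof (rule poly_eqI_degree_lead_coeff[of _ "n + 1" _ "x ` {..n}"])
  have "degree (\<Prod>m\<le>n. [:- x m, 1:]) = n + 1"
    by (subst degree_prod_eq_sum_degree) auto
  moreover have "lead_coeff (\<Prod>m\<le>n. [:- x m, 1:]) = 1"
    by (simp add: lead_coeff_prod)
  ultimately show "poly.coeff v (n + 1) = poly.coeff (Polynomial.smult (lead_coeff v) (\<Prod>m\<le>n. [:- x m, 1:])) (n + 1)"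
    and "degree (Polynomial.smult (lead_coeff v) (\<Prod>m\<le>n. [:- x m, 1:])) \<le> n + 1"
    using assms(2) by simp_all
  show "n + 1 \<le> card (x ` {..n})" using card_image[OF assms(1)] by simp
qed (use assms in \<open>auto simp: poly_prod\<close>)

lemma poly_eq_pderiv_lagrange_basis:
  fixes v :: "'a::field poly"
  assumes "inj_on x {..n}" "degree v = n + 1" "\<And>i. i \<le> n \<Longrightarrow> poly v (x i) = 0" "k \<le> n"
  shows "poly v t = poly (pderiv v) (x k) * poly (lagrange_basis n x k) t * (t - x k)"
proof -
  define R where "R = (\<Prod>m\<in>{..n}-{k}. [:- x m, 1:])"
  have R_node: "poly R (x k) = (\<Prod>m\<in>{..n}-{k}. x k - x m)"
    by (simp add: R_def poly_prod)
  have R_node_nz: "poly R (x k) \<noteq> 0"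
    using assms(1,4) by (auto simp: R_node inj_on_def)
  have "(\<Prod>m\<le>n. [:- x m, 1:]) = [:- x k, 1:] * R"
    unfolding R_def using assms(4) by (subst prod.remove[of _ k]) auto
  then have v_eq: "v = Polynomial.smult (lead_coeff v) ([:- x k, 1:] * R)"
    using eq_smult_lead_coeff_prod_roots[OF assms(1-3)] by simp
  have "pderiv ([:- x k, 1:] * R) = [:- x k, 1:] * pderiv R + R"
    by (subst pderiv_mult) (simp add: pderiv_pCons)
  then have "poly (pderiv v) (x k) = lead_coeff v * poly R (x k)"
    by (subst v_eq) (simp add: pderiv_smult)
  moreover have "poly v t = lead_coeff v * (t - x k) * poly R t"
    by (subst v_eq) (simp add: algebra_simps)
  ultimately show ?thesis
    using R_node_nz by (simp add: lagrange_basis_def R_def[symmetric] R_node[symmetric])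
qed

definition bezoutian :: "'a::field poly \<Rightarrow> 'a poly \<Rightarrow> 'a \<Rightarrow> 'a \<Rightarrow> 'a" where
  "bezoutian v w s t = (poly v s * poly w t - poly v t * poly w s) / (s - t)"

lemma bezoutian_commute: "bezoutian v w s t = bezoutian v w t s"
  unfolding bezoutian_def by (metis minus_diff_eq minus_divide_divide)

lemma bezoutian_lagrange_off_nodes:
  fixes v w :: "'a::field poly"
  assumes inj: "inj_on x {..n}" and deg: "degree v = n + 1" "degree w \<le> n + 1"
    and roots: "\<And>i. i \<le> n \<Longrightarrow> poly v (x i) = 0"
    and t: "t \<notin> x ` {..n}" and "s \<noteq> t"
  shows "bezoutian v w s t = (\<Sum>k\<le>n. poly (pderiv v) (x k) * poly w (x k) *
           poly (lagrange_basis n x k) s * poly (lagrange_basis n x k) t)"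
proof -
  define L where "L = lagrange_basis n x"
  define c where "c k = poly (pderiv v) (x k) * poly w (x k)" for k
  define N where "N = Polynomial.smult (poly w t) v - Polynomial.smult (poly v t) w"
  define Q where "Q = (\<Sum>k\<le>n. Polynomial.smult (c k * poly (L k) t) (L k))"
  have "N = [:- t, 1:] * Q"
  proof (rule poly_eqI_degree[of "insert t (x ` {..n})"])
    have "card (insert t (x ` {..n})) = n + 2"
      using t card_image[OF inj] by simp
    moreover have "degree N \<le> n + 1"
      unfolding N_def using deg by (intro order.trans[OF degree_diff_le_max]) auto
    moreover have "degree Q \<le> n"
      unfolding Q_def L_def
      by (intro degree_sum_le) (auto intro: order.trans[OF degree_smult_le] degree_lagrange_basis)
    then have "degree ([:- t, 1:] * Q) \<le> n + 1"
      by (intro order.trans[OF degree_mult_le]) auto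
    ultimately show "degree N < card (insert t (x ` {..n}))"
      and "degree ([:- t, 1:] * Q) < card (insert t (x ` {..n}))" by auto
  next
    fix z assume "z \<in> insert t (x ` {..n})"
    then consider "z = t" | m where "m \<le> n" "z = x m" by auto
    then show "poly N z = poly ([:- t, 1:] * Q) z"
    proof cases
      case 1 then show ?thesis by (simp add: N_def)
    next
      case 2
      have "poly Q (x m) = c m * poly (L m) t"
        using 2 inj by (simp add: Q_def L_def poly_sum poly_lagrange_basis_node if_distrib cong: if_cong)
      moreover have "poly v t = poly (pderiv v) (x m) * poly (L m) t * (t - x m)"
        unfolding L_def by (rule poly_eq_pderiv_lagrange_basis[OF inj deg(1) roots 2(1)])
      ultimately show ?thesis
        using 2 roots by (simp add: N_def c_def) (simp add: algebra_simps)
    qed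
  qed
  then have "poly N s = poly ([:- t, 1:] * Q) s"
    by (rule arg_cong)
  also have "\<dots> = (s - t) * poly Q s"
    by (simp add: algebra_simps)
  finally have "poly v s * poly w t - poly v t * poly w s = (s - t) * poly Q s"
    by (simp add: N_def mult.commute)
  with \<open>s \<noteq> t\<close> show ?thesis
    by (simp add: bezoutian_def Q_def L_def c_def poly_sum mult_ac)
qed

lemma bezoutian_lagrange:
  fixes v w :: "'a::field poly"
  assumes inj: "inj_on x {..n}" and deg: "degree v = n + 1" "degree w \<le> n + 1"
    and roots: "\<And>i. i \<le> n \<Longrightarrow> poly v (x i) = 0" and "s \<noteq> t"
  shows "bezoutian v w s t = (\<Sum>k\<le>n. poly (pderiv v) (x k) * poly w (x k) *
           poly (lagrange_basis n x k) s * poly (lagrange_basis n x k) t)"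
proof -
  consider "t \<notin> x ` {..n}" | "s \<notin> x ` {..n}" | i j where "i \<le> n" "j \<le> n" "s = x i" "t = x j"
    by blast
  then show ?thesis
  proof cases
    case 1
    show ?thesis by (rule bezoutian_lagrange_off_nodes[OF inj deg roots 1 \<open>s \<noteq> t\<close>])
  next
    case 2
    then show ?thesis
      using bezoutian_lagrange_off_nodes[OF inj deg roots 2, of t] \<open>s \<noteq> t\<close>
      by (simp add: bezoutian_commute[of v w s] mult_ac)
  next
    case 3
    then have "i \<noteq> j" using \<open>s \<noteq> t\<close> by auto
    with 3 inj show ?thesis
      by (auto simp: bezoutian_def roots poly_lagrange_basis_node intro!: sum.neutral)
  qed
qed

lemma poly_eq_0_off_point:
  fixes p :: "'a::{idom, ring_char_0} poly"
  assumes "\<And>s. s \<noteq> t \<Longrightarrow> poly p s = 0"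
  shows "p = 0"
proof (rule ccontr)
  assume "p \<noteq> 0"
  then have "finite (insert t {s. poly p s = 0})"
    using poly_roots_finite by blast
  then obtain s where "s \<notin> insert t {s. poly p s = 0}"
    using ex_new_if_finite[OF infinite_UNIV_char_0] by blast
  with assms show False by auto
qed

lemma is_poly_basis_eq_0:
  assumes "is_poly_basis n b" "(\<Sum>j\<le>n. Polynomial.smult (c j) (b j)) = 0" "j \<le> n"
  shows "c j = 0"
  using assms unfolding is_poly_basis_def by blast

lemma is_poly_basis_bilinear_eq_0:
  assumes basis: "is_poly_basis n b"
    and zero: "\<And>s t. s \<noteq> t \<Longrightarrow> (\<Sum>i\<le>n. \<Sum>j\<le>n. A i j * poly (b i) s * poly (b j) t) = 0"
    and "i \<le> n" "j \<le> n"
  shows "A i j = 0"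
proof -
  have row: "(\<Sum>j\<le>n. A i j * poly (b j) t) = 0" if "i \<le> n" for i t
  proof -
    have "(\<Sum>i\<le>n. Polynomial.smult (\<Sum>j\<le>n. A i j * poly (b j) t) (b i)) = 0"
    proof (rule poly_eq_0_off_point)
      fix s :: real assume "s \<noteq> t"
      then show "poly (\<Sum>i\<le>n. Polynomial.smult (\<Sum>j\<le>n. A i j * poly (b j) t) (b i)) s = 0"
        using zero by (simp add: poly_sum sum_distrib_left mult_ac)
    qed
    then show ?thesis
      using is_poly_basis_eq_0[OF basis, of "\<lambda>i. \<Sum>j\<le>n. A i j * poly (b j) t"] that by blast
  qed
  have "(\<Sum>j\<le>n. Polynomial.smult (A i j) (b j)) = 0"
    by (rule poly_all_0_iff_0[THEN iffD1]) (simp add: poly_sum row \<open>i \<le> n\<close> mult_ac)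
  then show ?thesis
    using is_poly_basis_eq_0[OF basis, of "A i"] \<open>j \<le> n\<close> by blast
qed

lemma is_poly_basis_bilinear_expansion:
  assumes basis: "is_poly_basis n b" and deg: "\<And>k. k \<in> K \<Longrightarrow> degree (p k) \<le> n"
  obtains M where "M \<in> carrier_mat (n+1) (n+1)"
    "\<And>s t. (\<Sum>k\<in>K. c k * poly (p k) s * poly (p k) t) =
       (\<Sum>i\<le>n. \<Sum>j\<le>n. M $$ (i,j) * poly (b i) s * poly (b j) t)"
proof -
  have "\<forall>k. \<exists>\<alpha>. k \<in> K \<longrightarrow> p k = (\<Sum>i\<le>n. Polynomial.smult (\<alpha> i) (b i))"
    using basis deg unfolding is_poly_basis_def by blast
  then obtain \<alpha> where \<alpha>: "\<And>k. k \<in> K \<Longrightarrow> p k = (\<Sum>i\<le>n. Polynomial.smult (\<alpha> k i) (b i))"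
    by metis
  define M where "M = mat (n+1) (n+1) (\<lambda>(i,j). \<Sum>k\<in>K. c k * \<alpha> k i * \<alpha> k j)"
  have "(\<Sum>k\<in>K. c k * poly (p k) s * poly (p k) t) =
        (\<Sum>i\<le>n. \<Sum>j\<le>n. M $$ (i,j) * poly (b i) s * poly (b j) t)" for s t
  proof -
    have "(\<Sum>k\<in>K. c k * poly (p k) s * poly (p k) t) =
          (\<Sum>k\<in>K. \<Sum>i\<le>n. \<Sum>j\<le>n. c k * \<alpha> k i * \<alpha> k j * poly (b i) s * poly (b j) t)"
      by (intro sum.cong refl) (simp add: \<alpha> poly_sum sum_product sum_distrib_left mult_ac)
    also have "\<dots> = (\<Sum>i\<le>n. \<Sum>j\<le>n. \<Sum>k\<in>K. c k * \<alpha> k i * \<alpha> k j * poly (b i) s * poly (b j) t)"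
      by (subst sum.swap) (simp add: sum.swap[of _ K])
    also have "\<dots> = (\<Sum>i\<le>n. \<Sum>j\<le>n. M $$ (i,j) * poly (b i) s * poly (b j) t)"
      by (intro sum.cong refl) (simp add: M_def sum_distrib_right)
    finally show ?thesis .
  qed
  moreover have "M \<in> carrier_mat (n+1) (n+1)" by (simp add: M_def)
  ultimately show ?thesis using that by blast
qed

lemma bezout_eqI:
  assumes basis: "is_poly_basis n b" and M: "M \<in> carrier_mat (n+1) (n+1)"
    and expansion: "\<And>s t. s \<noteq> t \<Longrightarrow>
      bezoutian v w s t = (\<Sum>i\<le>n. \<Sum>j\<le>n. M $$ (i,j) * poly (b i) s * poly (b j) t)"
  shows "bezout n b v w = M"
  unfolding bezout_def
proof (rule the_equality)
  show "M \<in> carrier_mat (n+1) (n+1) \<and> (\<forall>s t. s \<noteq> t \<longrightarrow>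
      (poly v s * poly w t - poly v t * poly w s) / (s - t) =
      (\<Sum>i\<le>n. \<Sum>j\<le>n. M $$ (i,j) * poly (b i) s * poly (b j) t))"
    using M expansion by (simp add: bezoutian_def)
next
  fix M' assume M': "M' \<in> carrier_mat (n+1) (n+1) \<and> (\<forall>s t. s \<noteq> t \<longrightarrow>
      (poly v s * poly w t - poly v t * poly w s) / (s - t) =
      (\<Sum>i\<le>n. \<Sum>j\<le>n. M' $$ (i,j) * poly (b i) s * poly (b j) t))"
  show "M' = M"
  proof (rule eq_matI)
    fix i j assume "i < dim_row M" "j < dim_col M"
    then have ij: "i \<le> n" "j \<le> n" using M by auto
    have "M' $$ (i,j) - M $$ (i,j) = 0"
    proof (rule is_poly_basis_bilinear_eq_0[OF basis _ ij])
      fix s t :: real assume "s \<noteq> t"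
      with M' expansion[of s t] show
        "(\<Sum>i\<le>n. \<Sum>j\<le>n. (M' $$ (i,j) - M $$ (i,j)) * poly (b i) s * poly (b j) t) = 0"
        by (simp add: bezoutian_def left_diff_distrib sum_subtractf)
    qed
    then show "M' $$ (i,j) = M $$ (i,j)" by simp
  qed (use M M' in auto)
qed

lemma vandermonde_carrier_mat: "vandermonde n b x \<in> carrier_mat (n+1) (n+1)"
  unfolding vandermonde_def by (rule mat_carrier)

lemma index_vandermonde_mult_transpose:
  assumes "A \<in> carrier_mat (n+1) (n+1)" "i \<le> n" "k \<le> n"
  shows "(vandermonde n b x * A * transpose_mat (vandermonde n b x)) $$ (i,k) =
    (\<Sum>r\<le>n. \<Sum>l\<le>n. A $$ (r,l) * poly (b r) (x i) * poly (b l) (x k))"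
  using assms
  by (simp add: vandermonde_def scalar_prod_def atLeast0LessThan lessThan_Suc_atMost
      sum_distrib_left sum_distrib_right mult_ac) (subst sum.swap, simp add: mult_ac)

lemma bezout_lagrange_expansion:
  assumes basis: "is_poly_basis n b" and inj: "inj_on x {..n}"
    and deg: "degree v = n + 1" "degree w \<le> n + 1"
    and roots: "\<And>i. i \<le> n \<Longrightarrow> poly v (x i) = 0"
  shows "bezout n b v w \<in> carrier_mat (n+1) (n+1)"
    and "(\<Sum>k\<le>n. poly (pderiv v) (x k) * poly w (x k) *
            poly (lagrange_basis n x k) s * poly (lagrange_basis n x k) t) =
         (\<Sum>i\<le>n. \<Sum>j\<le>n. bezout n b v w $$ (i,j) * poly (b i) s * poly (b j) t)"
proof -
  define L where "L = lagrange_basis n x"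
  define c where "c k = poly (pderiv v) (x k) * poly w (x k)" for k
  obtain M where M: "M \<in> carrier_mat (n+1) (n+1)"
    and expansion: "\<And>s t. (\<Sum>k\<le>n. c k * poly (L k) s * poly (L k) t) =
       (\<Sum>i\<le>n. \<Sum>j\<le>n. M $$ (i,j) * poly (b i) s * poly (b j) t)"
    using is_poly_basis_bilinear_expansion[OF basis, of "{..n}" L]
    unfolding L_def using degree_lagrange_basis by blast
  have "bezout n b v w = M"
    using basis M
  proof (rule bezout_eqI)
    fix s t :: real assume "s \<noteq> t"
    then show "bezoutian v w s t = (\<Sum>i\<le>n. \<Sum>j\<le>n. M $$ (i,j) * poly (b i) s * poly (b j) t)"
      using bezoutian_lagrange[OF inj deg roots] expansion by (simp add: L_def c_def)
  qed
  with M expansion show "bezout n b v w \<in> carrier_mat (n+1) (n+1)"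
    and "(\<Sum>k\<le>n. poly (pderiv v) (x k) * poly w (x k) *
            poly (lagrange_basis n x k) s * poly (lagrange_basis n x k) t) =
         (\<Sum>i\<le>n. \<Sum>j\<le>n. bezout n b v w $$ (i,j) * poly (b i) s * poly (b j) t)"
    by (simp_all add: L_def c_def)
qed

lemma vandermonde_bezout_transpose:
  assumes basis: "is_poly_basis n b" and inj: "inj_on x {..n}"
    and deg: "degree v = n + 1" "degree w \<le> n + 1"
    and roots: "\<And>i. i \<le> n \<Longrightarrow> poly v (x i) = 0"
  shows "vandermonde n b x * bezout n b v w * transpose_mat (vandermonde n b x) =
    mat_diag (n+1) (\<lambda>k. poly (pderiv v) (x k) * poly w (x k))"
proof (rule eq_matI)
  note expansion = bezout_lagrange_expansion[OF basis inj deg roots]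
  fix i k assume "i < dim_row (mat_diag (n+1) (\<lambda>k. poly (pderiv v) (x k) * poly w (x k)))"
    "k < dim_col (mat_diag (n+1) (\<lambda>k. poly (pderiv v) (x k) * poly w (x k)))"
  then have ik: "i \<le> n" "k \<le> n" by (auto simp: mat_diag_def)
  have "(\<Sum>m\<le>n. poly (pderiv v) (x m) * poly w (x m) *
          poly (lagrange_basis n x m) (x i) * poly (lagrange_basis n x m) (x k)) =
        mat_diag (n+1) (\<lambda>k. poly (pderiv v) (x k) * poly w (x k)) $$ (i,k)"
    using ik inj by (subst sum.remove[of _ k])
      (auto simp: mat_diag_def poly_lagrange_basis_node intro!: sum.neutral)
  then show "(vandermonde n b x * bezout n b v w * transpose_mat (vandermonde n b x)) $$ (i,k) =
      mat_diag (n+1) (\<lambda>k. poly (pderiv v) (x k) * poly w (x k)) $$ (i,k)"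
    using ik by (simp add: index_vandermonde_mult_transpose[OF expansion(1)] expansion(2))
qed (auto simp: vandermonde_def mat_diag_def)

lemma mat_diag_mult_inverse:
  fixes c :: "nat \<Rightarrow> 'a::field"
  assumes "\<And>j. j < n \<Longrightarrow> c j \<noteq> 0"
  shows "mat_diag n c * mat_diag n (\<lambda>j. 1 / c j) = 1\<^sub>m n"
  unfolding mat_diag_diag using assms by (intro eq_matI) (auto simp: mat_diag_def)

lemma inverse_of_mult_transpose_eq_mat_diag:
  fixes V A :: "'a::field mat"
  assumes V: "V \<in> carrier_mat n n" and A: "A \<in> carrier_mat n n"
    and diag: "V * A * transpose_mat V = mat_diag n c" and nz: "\<And>j. j < n \<Longrightarrow> c j \<noteq> 0"
  defines "M \<equiv> A * transpose_mat V * mat_diag n (\<lambda>j. 1 / c j)"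
  shows "inverts_mat V M" "inverts_mat M V" "invertible_mat V"
proof -
  have VT: "transpose_mat V \<in> carrier_mat n n" using V by simp
  have M: "M \<in> carrier_mat n n"
    unfolding M_def by (rule mult_carrier_mat[OF mult_carrier_mat[OF A VT] mat_diag_dim])
  have "V * M = V * A * transpose_mat V * mat_diag n (\<lambda>j. 1 / c j)"
    by (simp only: M_def assoc_mult_mat[OF V A VT]
        assoc_mult_mat[OF V mult_carrier_mat[OF A VT] mat_diag_dim])
  also have "\<dots> = 1\<^sub>m n"
    unfolding diag using nz by (rule mat_diag_mult_inverse)
  finally have VM: "V * M = 1\<^sub>m n" .
  have MV: "M * V = 1\<^sub>m n"
    by (rule mat_mult_left_right_inverse[OF V M VM])
  show "inverts_mat V M" "inverts_mat M V"
    using VM MV V M by (auto simp: inverts_mat_def)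
  then show "invertible_mat V"
    using V unfolding invertible_mat_def by auto
qed

theorem theorem2p1:
  fixes n :: nat and b :: "nat \<Rightarrow> real poly" and x :: "nat \<Rightarrow> real" and v w :: "real poly"
  assumes "is_poly_basis n b"
    and "\<forall>i<n. x i < x (Suc i)"
    and "degree v = n + 1" and "degree w = n + 1"
    and "\<forall>i\<le>n. poly v (x i) = 0 \<and> poly (pderiv v) (x i) \<noteq> 0 \<and> poly w (x i) \<noteq> 0"
  shows "invertible_mat (vandermonde n b x) \<and>
    (let M = bezout n b v w * transpose_mat (vandermonde n b x) *
             mat (n+1) (n+1) (\<lambda>(i,j). if i = j then 1 / (poly (pderiv v) (x j) * poly w (x j)) else 0)
     in inverts_mat (vandermonde n b x) M \<and> inverts_mat M (vandermonde n b x))"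
proof -
  have inj: "inj_on x {..n}"
    using assms(2) by (intro inj_on_atMost_if_Suc_less) auto
  have bezout: "bezout n b v w \<in> carrier_mat (n+1) (n+1)"
    by (rule bezout_lagrange_expansion(1)[OF assms(1) inj assms(3)]) (use assms(4,5) in auto)
  have "vandermonde n b x * bezout n b v w * transpose_mat (vandermonde n b x) =
      mat_diag (n+1) (\<lambda>j. poly (pderiv v) (x j) * poly w (x j))"
    by (rule vandermonde_bezout_transpose[OF assms(1) inj assms(3)]) (use assms(4,5) in auto)
  from inverse_of_mult_transpose_eq_mat_diag[OF vandermonde_carrier_mat bezout this]
  show ?thesis
    using assms(5) by (simp add: mat_diag_def Let_def)
qed
end
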